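(* Let $n\geq1$, $\sigma\in PGL_{2n+2}(\mathbb{C})$ and let $\tilde\sigma\in GL_{2n+2}(\mathbb{C})$ be a representative of $\sigma$. If $\operatorname{rank}(\tilde\sigma-\alpha I)\geq n+1$ for every $\alpha\in\mathbb{C}$, then there is an $n$-dimensional projective linear subspace $\ell\subset\mathbb{P}^{2n+1}$ such that $\sigma(\ell)\cap\ell=\emptyset$. *)

theory Defs
  imports "HOL-Analysis.Analysis"
begin

end

(*
  Let g be the map induced by A on V/S, where S is an A-invariant subspace with dim V/S = 2k
  and every eigenspace of g has dimension at most k. Since C is algebraically closed, one finds
  w such that w and g w span a g-invariant plane P, chosen so that the bound survives, with
  k - 1, on V/(S + P). Only the eigenvalues whose eigenspace has dimension exactly k are
  delicate: there are at most two of them, and w must avoid the image of g - lambda for each.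
  Starting from S = 0, where the rank hypothesis bounds every eigenspace by n + 1, and
  iterating n + 1 times gives w_1, ..., w_(n+1) such that the w_i and A w_i span V. Then
  W = span {w_i} satisfies W + A W = V and dim W <= n + 1, which forces dim W = n + 1 and
  A W to meet W only in 0.
*)
theory Submission
  imports Defs "HOL-Computational_Algebra.Fundamental_Theorem_Algebra"
begin

section \<open>Rank and nullity\<close>

lemma span_Int_span_Diff_eq_0:
  fixes B :: "('a::field^'n) set"
  assumes "vec.independent B" and "A \<subseteq> B"
  shows "vec.span A \<inter> vec.span (B - A) = {0}"
proof -
  have fin: "finite B"
    using assms(1) vec.independent_bound_general by blast
  have "vec.dim {x + y |x y. x \<in> vec.span A \<and> y \<in> vec.span (B - A)}
          + vec.dim (vec.span A \<inter> vec.span (B - A))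
        = vec.dim (vec.span A) + vec.dim (vec.span (B - A))"
    by (rule vec.dim_sums_Int) auto
  moreover have "{x + y |x y. x \<in> vec.span A \<and> y \<in> vec.span (B - A)} = vec.span B"
    using vec.span_Un[of A "B - A"] assms(2) by (simp add: Un_absorb1)
  moreover have "vec.independent A" "vec.independent (B - A)"
    using assms vec.independent_mono by blast+
  ultimately have "vec.dim (vec.span A \<inter> vec.span (B - A)) = 0"
    using assms fin card_Diff_subset[of A B] card_mono[of B A] finite_subset[of A B]
    by (simp add: vec.dim_eq_card_independent)
  then show ?thesis by (auto simp: vec.span_zero)
qed

lemma dim_image_add_dim_kernel:
  fixes h :: "'a::field^'n \<Rightarrow> 'a^'m"
  assumes lin: "Vector_Spaces.linear (*s) (*s) h" and Q: "vec.subspace Q"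
  shows "vec.dim (h ` Q) + vec.dim {x\<in>Q. h x = 0} = vec.dim Q"
proof -
  define K where "K = {x\<in>Q. h x = 0}"
  obtain BK where BK: "BK \<subseteq> K" "vec.independent BK" "K \<subseteq> vec.span BK" "card BK = vec.dim K"
    using vec.basis_exists by blast
  have "BK \<subseteq> Q"
    using BK(1) by (auto simp: K_def)
  then obtain B where B: "BK \<subseteq> B" "B \<subseteq> Q" "vec.independent B" "Q \<subseteq> vec.span B"
    using vec.maximal_independent_subset_extend[OF _ BK(2)] by metis
  define C where "C = B - BK"
  have finB: "finite B"
    using B(3) vec.independent_bound_general by blast
  have spanB: "vec.span B = Q"
    using B Q vec.span_subspace by blast
  have "inj_on h (vec.span C)"
  proof (rule vec.linear_inj_on_iff_eq_0[OF lin vec.subspace_span, THEN iffD2], intro ballI impI)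
    fix x assume x: "x \<in> vec.span C" "h x = 0"
    then have "x \<in> K"
      using spanB vec.span_mono[of C B] by (auto simp: C_def K_def)
    then show "x = 0"
      using x(1) BK(3) span_Int_span_Diff_eq_0[OF B(3,1)] by (auto simp: C_def)
  qed
  then have "vec.dim (h ` C) = card C"
    using vec.dim_image_eq[OF lin] vec.dim_eq_card_independent[of C] vec.independent_mono[OF B(3)]
    by (simp add: C_def)
  moreover have "vec.span (h ` C) = h ` Q"
  proof -
    have "h ` B \<subseteq> insert 0 (h ` C)"
      using BK(1) by (auto simp: C_def K_def)
    then have "vec.span (h ` B) \<subseteq> vec.span (h ` C)"
      using vec.span_mono[of "h ` B" "insert 0 (h ` C)"] by simp
    moreover have "vec.span (h ` C) \<subseteq> vec.span (h ` B)"
      by (rule vec.span_mono) (auto simp: C_def)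
    ultimately show ?thesis
      using vec.linear_span_image[OF lin, of B] spanB by simp
  qed
  moreover have "card B = card BK + card C"
    using finB B(1) card_Diff_subset[of BK B] card_mono[of B BK] finite_subset[of BK B]
    by (simp add: C_def)
  moreover have "vec.dim Q = card B"
    using spanB vec.dim_span_eq_card_independent[OF B(3)] by simp
  ultimately show ?thesis
    using BK(4) by (metis K_def add.commute vec.dim_span)
qed

lemma dim_rows_le_dim_columns:
  fixes M :: "'a::field^'n^'m"
  shows "vec.dim (rows M) \<le> vec.dim (columns M)"
proof -
  obtain B where B: "B \<subseteq> columns M" "vec.independent B" "columns M \<subseteq> vec.span B"
      "card B = vec.dim (columns M)"
    using vec.basis_exists by blast
  have finB: "finite B"
    using B(2) vec.independent_bound_general by blast
  have "\<exists>u. column j M = (\<Sum>b\<in>B. u b *s b)" for j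
    using B(3) vec.span_finite[OF finB] by (auto simp: columns_def)
  then obtain u where u: "\<And>j. column j M = (\<Sum>b\<in>B. u j b *s b)"
    by metis
  define r where "r b = (\<chi> j. u j b)" for b
  have rowi: "row i M = (\<Sum>b\<in>B. (b $ i) *s r b)" for i
  proof (rule vec_eq_iff[THEN iffD2], rule allI)
    fix j
    have "M $ i $ j = (\<Sum>b\<in>B. u j b * b $ i)"
      using arg_cong[OF u[of j], of "\<lambda>v. v $ i"] by (simp add: column_def sum_component)
    then show "row i M $ j = (\<Sum>b\<in>B. (b $ i) *s r b) $ j"
      by (simp add: row_def sum_component r_def mult.commute)
  qed
  have "rows M \<subseteq> vec.span (r ` B)"
  proof
    fix x assume "x \<in> rows M"
    then obtain i where "x = row i M"
      by (auto simp: rows_def)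
    then show "x \<in> vec.span (r ` B)"
      by (simp add: rowi vec.span_sum vec.span_scale vec.span_base)
  qed
  then have "vec.dim (rows M) \<le> card (r ` B)"
    using vec.dim_le_card finB by blast
  also have "\<dots> \<le> card B"
    using card_image_le finB by blast
  finally show ?thesis
    using B(4) by simp
qed

lemma columns_subset_range:
  fixes M :: "'a::field^'n^'m"
  shows "columns M \<subseteq> range (\<lambda>x. M *v x)"
proof
  fix c assume "c \<in> columns M"
  then obtain j where "c = column j M"
    by (auto simp: columns_def)
  moreover have "M *v axis j 1 = column j M"
    by (simp add: vec_eq_iff matrix_vector_mult_def axis_def column_def if_distrib cong: if_cong)
  ultimately show "c \<in> range (\<lambda>x. M *v x)"
    by (metis rangeI)
qed

lemma dim_null_space_add_rank_le:
  fixes M :: "'a::field^'n^'m"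
  shows "vec.dim {x. M *v x = 0} + rank M \<le> CARD('n)"
proof -
  have "vec.dim (range ((*v) M)) + vec.dim {x. M *v x = 0} = vec.dim (UNIV :: ('a^'n) set)"
    using dim_image_add_dim_kernel[OF matrix_vector_mul_linear_gen vec.subspace_UNIV, of M]
    by simp
  then have "vec.dim (range ((*v) M)) + vec.dim {x. M *v x = 0} = CARD('n)"
    by (simp only: vec_dim_card)
  moreover have "rank M \<le> vec.dim (range ((*v) M))"
    unfolding row_rank_def_gen
    using dim_rows_le_dim_columns[of M] vec.dim_subset[OF columns_subset_range[of M]] by simp
  ultimately show ?thesis
    by simp
qed

lemma subspace_scale_iff:
  fixes x :: "'a::field^'n"
  assumes "vec.subspace S" and "c \<noteq> 0"
  shows "c *s x \<in> S \<longleftrightarrow> x \<in> S"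
  using assms vec.subspace_scale[of S "c *s x" "inverse c"] vec.subspace_scale[of S x c]
  by (auto simp: vector_smult_assoc)

section \<open>Relative eigenvectors\<close>

text \<open>For the map \<open>g\<close> induced by \<open>f\<close> on the quotient by an \<open>f\<close>-invariant subspace \<open>S\<close>,
  \<open>rel_eigenspace f S \<nu>\<close> is the preimage of the \<open>\<nu>\<close>-eigenspace of \<open>g\<close> and
  \<open>rel_range f S \<nu>\<close> is the preimage of the image of \<open>g - \<nu>\<close>.\<close>

definition rel_eigenspace :: "('a::field^'n \<Rightarrow> 'a^'n) \<Rightarrow> ('a^'n) set \<Rightarrow> 'a \<Rightarrow> ('a^'n) set" where
  "rel_eigenspace f S \<nu> = {x. f x - \<nu> *s x \<in> S}"

definition rel_range :: "('a::field^'n \<Rightarrow> 'a^'n) \<Rightarrow> ('a^'n) set \<Rightarrow> 'a \<Rightarrow> ('a^'n) set" where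
  "rel_range f S \<nu> = {y + s |y s. y \<in> range (\<lambda>x. f x - \<nu> *s x) \<and> s \<in> S}"

lemma mem_rel_eigenspace: "x \<in> rel_eigenspace f S \<nu> \<longleftrightarrow> f x - \<nu> *s x \<in> S"
  by (simp add: rel_eigenspace_def)

definition poly_apply :: "('a::field^'n \<Rightarrow> 'a^'n) \<Rightarrow> 'a poly \<Rightarrow> 'a^'n \<Rightarrow> 'a^'n" where
  "poly_apply f p x = (\<Sum>i\<le>degree p. coeff p i *s (f ^^ i) x)"

lemma poly_apply_eq_sum:
  assumes "degree p \<le> d"
  shows "poly_apply f p x = (\<Sum>i\<le>d. coeff p i *s (f ^^ i) x)"
  unfolding poly_apply_def
  by (rule sum.mono_neutral_left) (use assms in \<open>auto simp: coeff_eq_0\<close>)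

lemma poly_apply_add: "poly_apply f (p + q) x = poly_apply f p x + poly_apply f q x"
proof -
  define d where "d = max (degree p) (degree q)"
  have "degree (p + q) \<le> d" "degree p \<le> d" "degree q \<le> d"
    using degree_add_le_max[of p q] by (auto simp: d_def)
  then show ?thesis
    by (simp only: poly_apply_eq_sum) (simp add: vector_sadd_rdistrib sum.distrib)
qed

lemma poly_apply_diff: "poly_apply f (p - q) x = poly_apply f p x - poly_apply f q x"
  using poly_apply_add[of f "p - q" q x] by simp

lemma poly_apply_smult: "poly_apply f (smult c p) x = c *s poly_apply f p x"
proof -
  have "poly_apply f (smult c p) x = (\<Sum>i\<le>degree p. coeff (smult c p) i *s (f ^^ i) x)"
    by (rule poly_apply_eq_sum) (rule degree_smult_le)
  then show ?thesis
    by (simp add: poly_apply_def vec.scale_sum_right vector_smult_assoc)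
qed

lemma poly_apply_monom: "poly_apply f (monom c j) x = c *s (f ^^ j) x"
proof -
  have "poly_apply f (monom c j) x = (\<Sum>i\<le>j. coeff (monom c j) i *s (f ^^ i) x)"
    by (rule poly_apply_eq_sum) (simp add: degree_monom_le)
  also have "\<dots> = (\<Sum>i\<le>j. if i = j then c *s (f ^^ i) x else 0)"
    by (rule sum.cong) (auto simp: coeff_monom)
  finally show ?thesis
    by simp
qed

lemma poly_apply_pCons_0:
  assumes "Vector_Spaces.linear (*s) (*s) f"
  shows "poly_apply f (pCons 0 q) x = f (poly_apply f q x)"
proof -
  have "poly_apply f (pCons 0 q) x = (\<Sum>i\<le>Suc (degree q). coeff (pCons 0 q) i *s (f ^^ i) x)"
    by (rule poly_apply_eq_sum) (simp add: degree_pCons_le)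
  also have "\<dots> = (\<Sum>i\<le>degree q. coeff q i *s (f ^^ Suc i) x)"
    by (subst sum.atMost_Suc_shift) simp
  finally show ?thesis
    by (simp add: poly_apply_def vec.linear_sum[OF assms] vec.linear_scale[OF assms])
qed

lemma poly_apply_linear_factor:
  assumes "Vector_Spaces.linear (*s) (*s) f"
  shows "poly_apply f ([:-z, 1:] * q) x = f (poly_apply f q x) - z *s poly_apply f q x"
proof -
  have "[:-z, 1:] * q = pCons 0 q - smult z q"
    by simp
  then show ?thesis
    by (simp only: poly_apply_diff poly_apply_smult poly_apply_pCons_0[OF assms])
qed

lemma exists_poly_apply_eq_0:
  fixes f :: "'a::field^'n \<Rightarrow> 'a^'n"
  shows "\<exists>p. p \<noteq> 0 \<and> poly_apply f p x = 0"
proof (cases "inj_on (\<lambda>i. (f ^^ i) x) {..CARD('n)}")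
  case True
  define X where "X = (\<lambda>i. (f ^^ i) x) ` {..CARD('n)}"
  have "card X = Suc CARD('n)"
    using True by (simp add: X_def card_image)
  then have "vec.dependent X"
    using vec.independent_bound_general[of X] dim_subset_UNIV_cart_gen[of X] by auto
  then obtain u where u: "\<exists>v\<in>X. u v \<noteq> 0" "(\<Sum>v\<in>X. u v *s v) = 0"
    using vec.dependent_finite[of X] by (auto simp: X_def)
  define p where "p = (\<Sum>i\<le>CARD('n). monom (u ((f ^^ i) x)) i)"
  have coeff_p: "coeff p i = u ((f ^^ i) x)" if "i \<le> CARD('n)" for i
    using that by (simp add: p_def coeff_sum coeff_monom)
  have "degree p \<le> CARD('n)"
    unfolding p_def by (rule degree_sum_le) (auto intro: order.trans[OF degree_monom_le])
  then have "poly_apply f p x = (\<Sum>i\<le>CARD('n). u ((f ^^ i) x) *s (f ^^ i) x)"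
    by (simp add: poly_apply_eq_sum coeff_p)
  also have "\<dots> = 0"
    using u(2) True by (simp add: X_def sum.reindex)
  finally have "poly_apply f p x = 0" .
  moreover have "p \<noteq> 0"
    using u(1) coeff_p by (auto simp: X_def)
  ultimately show ?thesis
    by blast
next
  case False
  then obtain i j where ij: "i \<noteq> j" "(f ^^ i) x = (f ^^ j) x"
    by (auto simp: inj_on_def)
  define p :: "'a poly" where "p = monom 1 i - monom 1 j"
  have "coeff p i = 1"
    using ij(1) by (simp add: p_def coeff_monom)
  then have "p \<noteq> 0"
    by auto
  moreover have "poly_apply f p x = 0"
    using ij(2) by (simp add: p_def poly_apply_diff poly_apply_monom)
  ultimately show ?thesis
    by blast
qed

lemma exists_rel_eigenvector_of_poly_apply:
  fixes f :: "complex^'n \<Rightarrow> complex^'n"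
  assumes lin: "Vector_Spaces.linear (*s) (*s) f" and T: "vec.subspace T"
  shows "p \<noteq> 0 \<Longrightarrow> x \<notin> T \<Longrightarrow> poly_apply f p x \<in> T \<Longrightarrow>
    \<exists>y \<nu>. y \<notin> T \<and> y \<in> rel_eigenspace f T \<nu>"
proof (induction "degree p" arbitrary: p rule: less_induct)
  case less
  show ?case
  proof (cases "degree p = 0")
    case True
    then obtain c where "p = [:c:]"
      by (metis degree_eq_zeroE)
    then show ?thesis
      using less.prems subspace_scale_iff[OF T, of c x]
      by (simp add: poly_apply_def)
  next
    case False
    then obtain z where "poly p z = 0"
      by (metis fundamental_theorem_of_algebra constant_degree)
    then obtain q where pq: "p = [:-z, 1:] * q"
      by (metis dvdE poly_eq_0_iff_dvd)
    with less.prems(1) have "q \<noteq> 0"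
      by auto
    then have "degree q < degree p"
      unfolding pq by (subst degree_mult_eq) auto
    show ?thesis
    proof (cases "poly_apply f q x \<in> T")
      case True
      then show ?thesis
        using less.hyps \<open>q \<noteq> 0\<close> \<open>degree q < degree p\<close> less.prems(2) by blast
    next
      case False
      then show ?thesis
        using less.prems(3) poly_apply_linear_factor[OF lin, of z q x] pq
        by (auto simp: mem_rel_eigenspace)
    qed
  qed
qed

lemma exists_rel_eigenvector:
  fixes f :: "complex^'n \<Rightarrow> complex^'n"
  assumes "Vector_Spaces.linear (*s) (*s) f" and "vec.subspace T" and "x \<notin> T"
  shows "\<exists>y \<nu>. y \<notin> T \<and> y \<in> rel_eigenspace f T \<nu>"
  using exists_poly_apply_eq_0[of f x] exists_rel_eigenvector_of_poly_apply[OF assms(1,2)] assms(3)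
    vec.subspace_0[OF assms(2)] by metis

section \<open>Invariant planes modulo an invariant subspace\<close>

definition plane_extension :: "('a::field^'n \<Rightarrow> 'a^'n) \<Rightarrow> ('a^'n) set \<Rightarrow> 'a^'n \<Rightarrow> ('a^'n) set" where
  "plane_extension f S w = vec.span (insert w (insert (f w) S))"

text \<open>Modulo \<open>S\<close>, such a \<open>w\<close> is not an eigenvector, and \<open>w\<close> and \<open>f w\<close> span an invariant plane
  on which \<open>f\<close> has the eigenvalues \<open>\<mu>\<close> and \<open>\<nu>\<close>.\<close>

definition plane_generator :: "('a::field^'n \<Rightarrow> 'a^'n) \<Rightarrow> ('a^'n) set \<Rightarrow> 'a^'n \<Rightarrow> bool" where
  "plane_generator f S w \<longleftrightarrow> (\<exists>\<mu> \<nu>. w \<in> rel_eigenspace f (rel_eigenspace f S \<mu>) \<nu> \<and>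
      w \<notin> rel_eigenspace f S \<mu> \<and> w \<notin> rel_eigenspace f S \<nu>)"

lemma rel_eigenspace_mono: "S \<subseteq> T \<Longrightarrow> rel_eigenspace f S \<nu> \<subseteq> rel_eigenspace f T \<nu>"
  by (auto simp: rel_eigenspace_def)

lemma rel_range_mono: "S \<subseteq> T \<Longrightarrow> rel_range f S \<nu> \<subseteq> rel_range f T \<nu>"
  by (auto simp: rel_range_def)

locale invariant_subspace =
  fixes f :: "'a::field^'n \<Rightarrow> 'a^'n" and S :: "('a^'n) set"
  assumes linear_f: "Vector_Spaces.linear (*s) (*s) f"
    and subspace_S: "vec.subspace S"
    and invariant: "f ` S \<subseteq> S"
begin

lemma linear_shift: "Vector_Spaces.linear (*s) (*s) (\<lambda>x. f x - \<nu> *s x)"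
  by (rule vec.linear_compose_sub[OF linear_f vec.linear_compose_scale_right[OF vec.linear_ident]])

lemma shift_commute: "f (f x - \<nu> *s x) = f (f x) - \<nu> *s f x"
  by (simp add: vec.linear_diff[OF linear_f] vec.linear_scale[OF linear_f])

lemma subspace_rel_eigenspace: "vec.subspace (rel_eigenspace f S \<nu>)"
proof -
  have "rel_eigenspace f S \<nu> = (\<lambda>x. f x - \<nu> *s x) -` S"
    by (auto simp: rel_eigenspace_def)
  then show ?thesis
    using vec.linear_subspace_vimage[OF linear_shift subspace_S] by simp
qed

lemma subset_rel_eigenspace: "S \<subseteq> rel_eigenspace f S \<nu>"
  using invariant subspace_S by (auto simp: rel_eigenspace_def vec.subspace_diff vec.subspace_scale)

lemma invariant_subspace_rel_eigenspace: "invariant_subspace f (rel_eigenspace f S \<nu>)"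
proof (rule invariant_subspace.intro[OF linear_f subspace_rel_eigenspace])
  show "f ` rel_eigenspace f S \<nu> \<subseteq> rel_eigenspace f S \<nu>"
    using invariant shift_commute by (force simp: rel_eigenspace_def)
qed

lemma rel_eigenspace_subset_rel_eigenspace2:
  "rel_eigenspace f S \<mu> \<subseteq> rel_eigenspace f (rel_eigenspace f S \<mu>) \<nu>"
  using invariant_subspace.subset_rel_eigenspace[OF invariant_subspace_rel_eigenspace] .

lemma subspace_rel_range: "vec.subspace (rel_range f S \<nu>)"
  unfolding rel_range_def
  by (rule vec.subspace_sums[OF vec.linear_subspace_image[OF linear_shift vec.subspace_UNIV] subspace_S])

lemma subset_rel_range: "S \<subseteq> rel_range f S \<nu>"
proof
  fix s assume "s \<in> S"
  moreover have "f 0 - \<nu> *s 0 = 0"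
    using vec.linear_0[OF linear_f] by simp
  ultimately show "s \<in> rel_range f S \<nu>"
    unfolding rel_range_def by (metis (mono_tags, lifting) add_0 mem_Collect_eq rangeI)
qed

lemma dim_rel_eigenspace_add_dim_rel_range:
  "vec.dim (rel_eigenspace f S \<nu>) + vec.dim (rel_range f S \<nu>) = CARD('n) + vec.dim S"
proof -
  let ?h = "\<lambda>x. f x - \<nu> *s x"
  let ?E = "rel_eigenspace f S \<nu>"
  have image: "?h ` ?E = range ?h \<inter> S"
    by (auto simp: rel_eigenspace_def)
  have kernel: "{x\<in>?E. ?h x = 0} = {x\<in>UNIV. ?h x = 0}"
    using vec.subspace_0[OF subspace_S] by (auto simp: rel_eigenspace_def)
  have "vec.dim (?h ` ?E) + vec.dim {x\<in>?E. ?h x = 0} = vec.dim ?E"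
    by (rule dim_image_add_dim_kernel[OF linear_shift subspace_rel_eigenspace])
  then have "vec.dim (range ?h \<inter> S) + vec.dim {x\<in>UNIV. ?h x = 0} = vec.dim ?E"
    unfolding image kernel .
  moreover have "vec.dim (range ?h) + vec.dim {x\<in>UNIV. ?h x = 0} = CARD('n)"
    using dim_image_add_dim_kernel[OF linear_shift vec.subspace_UNIV] vec_dim_card by metis
  moreover have "vec.dim (rel_range f S \<nu>) + vec.dim (range ?h \<inter> S) = vec.dim (range ?h) + vec.dim S"
    unfolding rel_range_def
    by (rule vec.dim_sums_Int[OF vec.linear_subspace_image[OF linear_shift vec.subspace_UNIV] subspace_S])
  ultimately show ?thesis
    by linarith
qed

lemma rel_eigenspace_subset_rel_range:
  assumes "\<mu> \<noteq> \<nu>"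
  shows "rel_eigenspace f S \<mu> \<subseteq> rel_range f S \<nu>"
proof
  fix x assume "x \<in> rel_eigenspace f S \<mu>"
  define c where "c = inverse (\<mu> - \<nu>)"
  have s: "- (c *s (f x - \<mu> *s x)) \<in> S"
    by (intro vec.subspace_neg[OF subspace_S] vec.subspace_scale[OF subspace_S])
      (use \<open>x \<in> rel_eigenspace f S \<mu>\<close> in \<open>simp add: rel_eigenspace_def\<close>)
  \<comment> \<open>Modulo \<open>S\<close>, \<open>f - \<nu>\<close> acts on this relative eigenspace
    as multiplication by \<open>\<mu> - \<nu> \<noteq> 0\<close>.\<close>
  have "(f (c *s x) - \<nu> *s (c *s x)) + - (c *s (f x - \<mu> *s x)) = (c * (\<mu> - \<nu>)) *s x"
    by (simp add: vec.linear_scale[OF linear_f] vec_eq_iff algebra_simps)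
  also have "\<dots> = x"
    using assms by (simp add: c_def)
  finally have "x = (f (c *s x) - \<nu> *s (c *s x)) + - (c *s (f x - \<mu> *s x))" ..
  moreover have "f (c *s x) - \<nu> *s (c *s x) \<in> range (\<lambda>x. f x - \<nu> *s x)"
    by blast
  ultimately show "x \<in> rel_range f S \<nu>"
    using s unfolding rel_range_def by blast
qed

lemma rel_eigenspace_Int:
  assumes "\<mu> \<noteq> \<nu>"
  shows "rel_eigenspace f S \<mu> \<inter> rel_eigenspace f S \<nu> = S"
proof
  show "rel_eigenspace f S \<mu> \<inter> rel_eigenspace f S \<nu> \<subseteq> S"
  proof
    fix x assume "x \<in> rel_eigenspace f S \<mu> \<inter> rel_eigenspace f S \<nu>"
    then have "f x - \<nu> *s x \<in> S" "f x - \<mu> *s x \<in> S"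
      by (auto simp: rel_eigenspace_def)
    then have "(f x - \<nu> *s x) - (f x - \<mu> *s x) \<in> S"
      by (rule vec.subspace_diff[OF subspace_S])
    moreover have "(f x - \<nu> *s x) - (f x - \<mu> *s x) = (\<mu> - \<nu>) *s x"
      by (simp add: vec_eq_iff algebra_simps)
    ultimately have "(\<mu> - \<nu>) *s x \<in> S"
      by (simp only:)
    moreover have "\<mu> - \<nu> \<noteq> 0"
      using assms by simp
    ultimately show "x \<in> S"
      using subspace_scale_iff[OF subspace_S] by blast
  qed
qed (use subset_rel_eigenspace in auto)

lemma rel_eigenspace2_Int_rel_eigenspace:
  assumes "w \<in> rel_eigenspace f (rel_eigenspace f S \<mu>) \<nu>" and "w \<in> rel_eigenspace f S \<kappa>"
  shows "w \<in> rel_eigenspace f S \<mu> \<or> w \<in> rel_eigenspace f S \<nu>"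
proof -
  define a where "a = f w - \<kappa> *s w"
  have a: "a \<in> S"
    using assms(2) by (simp add: a_def rel_eigenspace_def)
  then have fa: "f a - \<mu> *s a \<in> S"
    using invariant subspace_S by (auto intro: vec.subspace_diff vec.subspace_scale)
  have fy: "f (f w - \<nu> *s w) - \<mu> *s (f w - \<nu> *s w) \<in> S"
    using assms(1) by (simp add: rel_eigenspace_def)
  have "f (f w - \<nu> *s w) - \<mu> *s (f w - \<nu> *s w) - (f a - \<mu> *s a) \<in> S"
    using vec.subspace_diff[OF subspace_S fy fa] .
  moreover have "f (f w - \<nu> *s w) - \<mu> *s (f w - \<nu> *s w) - (f a - \<mu> *s a)
      = (\<kappa> - \<nu>) *s (f w - \<mu> *s w)"
    by (simp add: a_def shift_commute vec_eq_iff algebra_simps)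
  ultimately have "(\<kappa> - \<nu>) *s (f w - \<mu> *s w) \<in> S"
    by (simp only:)
  then have "\<kappa> = \<nu> \<or> f w - \<mu> *s w \<in> S"
    using subspace_scale_iff[OF subspace_S, of "\<kappa> - \<nu>" "f w - \<mu> *s w"] by force
  then show ?thesis
    using a by (auto simp: a_def rel_eigenspace_def)
qed

lemma invariant_subspace_plane_extension:
  assumes "plane_generator f S w"
  shows "invariant_subspace f (plane_extension f S w)"
proof -
  obtain \<mu> \<nu> where w: "w \<in> rel_eigenspace f (rel_eigenspace f S \<mu>) \<nu>"
    using assms by (auto simp: plane_generator_def)
  let ?X = "insert w (insert (f w) S)"
  have X: "?X \<subseteq> plane_extension f S w"
    unfolding plane_extension_def by (rule vec.span_superset)
  define y where "y = f w - \<nu> *s w"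
  have P: "vec.subspace (plane_extension f S w)"
    by (simp add: plane_extension_def)
  have "f y - \<mu> *s y \<in> S"
    using w by (simp add: y_def rel_eigenspace_def)
  moreover have "y \<in> plane_extension f S w"
    unfolding y_def using X by (intro vec.subspace_diff[OF P] vec.subspace_scale[OF P]) auto
  ultimately have "(f y - \<mu> *s y) + \<mu> *s y + \<nu> *s f w \<in> plane_extension f S w"
    using X by (intro vec.subspace_add[OF P] vec.subspace_scale[OF P]) auto
  moreover have "f (f w) = (f y - \<mu> *s y) + \<mu> *s y + \<nu> *s f w"
    by (simp add: y_def shift_commute vec_eq_iff algebra_simps)
  ultimately have "f (f w) \<in> plane_extension f S w"
    by (simp only:)
  then have "f ` ?X \<subseteq> plane_extension f S w"
    using X invariant by auto
  then have "f ` plane_extension f S w \<subseteq> plane_extension f S w"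
    unfolding plane_extension_def vec.linear_span_image[OF linear_f, symmetric]
    by (rule vec.span_minimal) simp
  then show ?thesis
    by (intro invariant_subspace.intro[OF linear_f]) (simp_all add: plane_extension_def)
qed

lemma dim_plane_extension:
  assumes "plane_generator f S w"
  shows "vec.dim (plane_extension f S w) = vec.dim S + 2"
proof -
  obtain \<mu> \<nu> where w: "w \<in> rel_eigenspace f (rel_eigenspace f S \<mu>) \<nu>"
      "w \<notin> rel_eigenspace f S \<mu>" "w \<notin> rel_eigenspace f S \<nu>"
    using assms by (auto simp: plane_generator_def)
  have span_S: "vec.span S = S"
    using subspace_S by simp
  have "w \<notin> vec.span S"
    using w(2) subset_rel_eigenspace span_S by blast
  moreover have "f w \<notin> vec.span (insert w S)"
  proof
    assume "f w \<in> vec.span (insert w S)"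
    then obtain \<kappa> where "f w - \<kappa> *s w \<in> S"
      using vec.span_breakdown_eq span_S by blast
    then show False
      using rel_eigenspace2_Int_rel_eigenspace[OF w(1)] w(2,3) by (auto simp: rel_eigenspace_def)
  qed
  moreover have "insert w (insert (f w) S) = insert (f w) (insert w S)"
    by auto
  ultimately show ?thesis
    unfolding plane_extension_def vec.dim_span by (simp add: vec.dim_insert)
qed

lemma plane_generator_add:
  assumes "x1 \<in> rel_eigenspace f S \<mu>" "x1 \<notin> S" "x2 \<in> rel_eigenspace f S \<nu>"
    "x2 \<notin> rel_eigenspace f S \<mu>" "\<mu> \<noteq> \<nu>"
  shows "plane_generator f S (x1 + x2)"
proof -
  let ?E2 = "rel_eigenspace f (rel_eigenspace f S \<mu>) \<nu>"
  have "x1 \<in> ?E2"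
    using assms(1) rel_eigenspace_subset_rel_eigenspace2 by blast
  moreover have "x2 \<in> ?E2"
    using assms(3) rel_eigenspace_mono[OF subset_rel_eigenspace] by blast
  ultimately have "x1 + x2 \<in> ?E2"
    using invariant_subspace.subspace_rel_eigenspace[OF invariant_subspace_rel_eigenspace]
    by (simp add: vec.subspace_add)
  moreover have "x1 + x2 \<notin> rel_eigenspace f S \<mu>"
    using assms(1,4) vec.subspace_diff[OF subspace_rel_eigenspace[of \<mu>], of "x1 + x2" x1] by auto
  moreover have "x1 + x2 \<notin> rel_eigenspace f S \<nu>"
    using assms vec.subspace_diff[OF subspace_rel_eigenspace[of \<nu>], of "x1 + x2" x2]
      rel_eigenspace_Int[of \<mu> \<nu>]
    by fastforce
  ultimately show ?thesis
    unfolding plane_generator_def by blast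
qed

lemma exists_rel_eigenvector_not_in:
  assumes "x \<in> rel_eigenspace f (rel_eigenspace f S \<mu>) \<nu>" and "x \<notin> rel_eigenspace f S \<mu>"
    and "\<nu> \<noteq> \<mu>"
  shows "\<exists>x'. x' \<in> rel_eigenspace f S \<nu> \<and> x' \<notin> rel_eigenspace f S \<mu>"
proof -
  define y where "y = f x - \<nu> *s x"
  define c where "c = inverse (\<nu> - \<mu>)"
  have y: "y \<in> rel_eigenspace f S \<mu>"
    using assms(1) by (simp add: y_def rel_eigenspace_def)
  \<comment> \<open>Modulo \<open>S\<close>, \<open>f\<close> acts on \<open>y\<close> as \<open>\<mu>\<close>,
    so adding \<open>y / (\<nu> - \<mu>)\<close> to \<open>x\<close> cancels \<open>(f - \<nu>) x\<close>.\<close>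
  have "f (x + c *s y) = f x + c *s f y"
    by (simp add: vec.linear_add[OF linear_f] vec.linear_scale[OF linear_f])
  then have "f (x + c *s y) - \<nu> *s (x + c *s y) = c *s (f y - \<mu> *s y) + (1 - c * (\<nu> - \<mu>)) *s y"
    by (simp add: y_def vec_eq_iff algebra_simps)
  also have "\<dots> = c *s (f y - \<mu> *s y)"
    using assms(3) by (simp add: c_def)
  finally have "x + c *s y \<in> rel_eigenspace f S \<nu>"
    using y vec.subspace_scale[OF subspace_S] by (simp only: rel_eigenspace_def mem_Collect_eq)
  moreover have "x + c *s y \<notin> rel_eigenspace f S \<mu>"
  proof
    assume "x + c *s y \<in> rel_eigenspace f S \<mu>"
    then have "(x + c *s y) - c *s y \<in> rel_eigenspace f S \<mu>"
      using y
      by (intro vec.subspace_diff[OF subspace_rel_eigenspace] vec.subspace_scale[OF subspace_rel_eigenspace])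
    then show False
      using assms(2) by simp
  qed
  ultimately show ?thesis
    by blast
qed

end

section \<open>Splitting off invariant planes\<close>

locale small_eigenspaces = invariant_subspace f S
  for f :: "'a::field^'n \<Rightarrow> 'a^'n" and S +
  fixes k :: nat
  assumes codim: "CARD('n) = vec.dim S + 2 * k"
    and dim_rel_eigenspace_le: "vec.dim (rel_eigenspace f S \<nu>) \<le> vec.dim S + k"
begin

definition critical :: "'a \<Rightarrow> bool" where
  "critical \<nu> \<longleftrightarrow> vec.dim (rel_eigenspace f S \<nu>) = vec.dim S + k"

lemma dim_rel_range_critical: "critical \<nu> \<Longrightarrow> vec.dim (rel_range f S \<nu>) = vec.dim S + k"
  using dim_rel_eigenspace_add_dim_rel_range[of \<nu>] codim by (simp add: critical_def)

lemma rel_range_critical_eq: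
  assumes "critical \<alpha>" "critical \<mu>" "\<mu> \<noteq> \<alpha>"
  shows "rel_range f S \<alpha> = rel_eigenspace f S \<mu>"
  using vec.subspace_dim_equal[OF subspace_rel_eigenspace subspace_rel_range
      rel_eigenspace_subset_rel_range[OF assms(3)]]
    dim_rel_range_critical[OF assms(1)] assms(2)
  by (simp add: critical_def)

lemma critical_cases:
  assumes "critical \<alpha>" "critical \<mu>" "\<alpha> \<noteq> \<mu>" "critical \<nu>" "1 \<le> k"
  shows "\<nu> = \<alpha> \<or> \<nu> = \<mu>"
proof (rule ccontr)
  assume "\<not> (\<nu> = \<alpha> \<or> \<nu> = \<mu>)"
  define U where "U = {x + y |x y. x \<in> rel_eigenspace f S \<alpha> \<and> y \<in> rel_eigenspace f S \<mu>}"
  have "U \<subseteq> rel_range f S \<nu>"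
  proof
    fix z assume "z \<in> U"
    then obtain x y where xy: "z = x + y" "x \<in> rel_eigenspace f S \<alpha>" "y \<in> rel_eigenspace f S \<mu>"
      unfolding U_def by blast
    then have "x \<in> rel_range f S \<nu>" "y \<in> rel_range f S \<nu>"
      using \<open>\<not> (\<nu> = \<alpha> \<or> \<nu> = \<mu>)\<close> rel_eigenspace_subset_rel_range[of \<alpha> \<nu>]
        rel_eigenspace_subset_rel_range[of \<mu> \<nu>]
      by blast+
    then show "z \<in> rel_range f S \<nu>"
      unfolding xy(1) by (rule vec.subspace_add[OF subspace_rel_range])
  qed
  then have "vec.dim U \<le> vec.dim (rel_range f S \<nu>)"
    by (rule vec.dim_subset)
  moreover have "vec.dim U + vec.dim S = 2 * (vec.dim S + k)"
    using vec.dim_sums_Int[OF subspace_rel_eigenspace subspace_rel_eigenspace, of \<alpha> \<mu>]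
      rel_eigenspace_Int[OF assms(3)] assms(1,2)
    by (simp add: U_def critical_def)
  ultimately show False
    using assms(5) dim_rel_range_critical[OF assms(4)] by simp
qed

lemma rel_eigenspace_neq_UNIV:
  assumes "1 \<le> k"
  shows "rel_eigenspace f S \<nu> \<noteq> UNIV"
proof
  assume "rel_eigenspace f S \<nu> = UNIV"
  then have "CARD('n) \<le> vec.dim S + k"
    using dim_rel_eigenspace_le[of \<nu>] by (simp only: vec_dim_card)
  then show False
    using codim assms by simp
qed

lemma critical_rel_eigenspace_not_subset:
  assumes "critical \<alpha>" "1 \<le> k"
  shows "\<not> rel_eigenspace f S \<alpha> \<subseteq> S"
  using vec.dim_subset[of "rel_eigenspace f S \<alpha>" S] assms by (auto simp: critical_def)

lemma critical_rel_eigenspace_not_subset_rel_range: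
  assumes "critical \<alpha>" "z \<in> rel_range f S \<alpha>" "z \<notin> rel_eigenspace f S \<alpha>"
  shows "\<not> rel_eigenspace f S \<alpha> \<subseteq> rel_range f S \<alpha>"
proof
  assume "rel_eigenspace f S \<alpha> \<subseteq> rel_range f S \<alpha>"
  then have "rel_eigenspace f S \<alpha> = rel_range f S \<alpha>"
    using dim_rel_range_critical[OF assms(1)] assms(1)
    by (intro vec.subspace_dim_equal[OF subspace_rel_eigenspace subspace_rel_range])
      (auto simp: critical_def)
  then show False
    using assms(2,3) by simp
qed

lemma exists_plane_generator_two_critical:
  assumes "critical \<alpha>" "critical \<mu>" "\<alpha> \<noteq> \<mu>" "1 \<le> k"
  shows "\<exists>w. plane_generator f S w \<and> (\<forall>\<nu>. critical \<nu> \<longrightarrow> w \<notin> rel_range f S \<nu>)"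
proof -
  obtain x1 where x1: "x1 \<in> rel_eigenspace f S \<alpha>" "x1 \<notin> S"
    using critical_rel_eigenspace_not_subset[OF assms(1,4)] by blast
  obtain x2 where x2: "x2 \<in> rel_eigenspace f S \<mu>" "x2 \<notin> S"
    using critical_rel_eigenspace_not_subset[OF assms(2,4)] by blast
  have x1_not: "x1 \<notin> rel_eigenspace f S \<mu>" and x2_not: "x2 \<notin> rel_eigenspace f S \<alpha>"
    using x1 x2 rel_eigenspace_Int[OF assms(3)] by auto
  have "x1 + x2 \<notin> rel_eigenspace f S \<alpha>"
    using x1(1) x2_not vec.subspace_diff[OF subspace_rel_eigenspace, of "x1 + x2" \<alpha> x1] by auto
  moreover have "x1 + x2 \<notin> rel_eigenspace f S \<mu>"
    using x2(1) x1_not vec.subspace_diff[OF subspace_rel_eigenspace, of "x1 + x2" \<mu> x2] by auto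
  ultimately have "x1 + x2 \<notin> rel_range f S \<nu>" if "critical \<nu>" for \<nu>
    using critical_cases[OF assms(1-3) that assms(4)]
      rel_range_critical_eq[OF assms(1,2) assms(3)[symmetric]] rel_range_critical_eq[OF assms(2,1,3)]
    by auto
  moreover have "plane_generator f S (x1 + x2)"
    using plane_generator_add[OF x1 x2(1) x2_not assms(3)] .
  ultimately show ?thesis
    by blast
qed

lemma small_eigenspaces_extension:
  assumes S': "invariant_subspace f S'" "S \<subseteq> S'" "vec.dim S' = vec.dim S + 2"
    and k: "1 \<le> k"
    and not_subset: "\<And>\<alpha>. critical \<alpha> \<Longrightarrow> \<not> S' \<subseteq> rel_range f S \<alpha>"
  shows "small_eigenspaces f S' (k - 1)"
proof -
  interpret S': invariant_subspace f S' by fact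
  have "vec.dim (rel_eigenspace f S' \<nu>) \<le> vec.dim S' + (k - 1)" for \<nu>
  proof -
    have sub: "rel_range f S \<nu> \<subseteq> rel_range f S' \<nu>"
      using rel_range_mono[OF assms(2)] .
    have dims: "vec.dim (rel_eigenspace f S \<nu>) + vec.dim (rel_range f S \<nu>) = CARD('n) + vec.dim S"
        "vec.dim (rel_eigenspace f S' \<nu>) + vec.dim (rel_range f S' \<nu>) = CARD('n) + vec.dim S'"
      by (rule dim_rel_eigenspace_add_dim_rel_range S'.dim_rel_eigenspace_add_dim_rel_range)+
    show ?thesis
    proof (cases "critical \<nu>")
      case True
      \<comment> \<open>Here the relative range grows strictly, which compensates for the growth of \<open>S\<close>.\<close>
      then have "rel_range f S \<nu> \<noteq> rel_range f S' \<nu>"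
        using not_subset S'.subset_rel_range by blast
      then have "vec.dim (rel_range f S \<nu>) < vec.dim (rel_range f S' \<nu>)"
        using vec.subspace_dim_equal[OF subspace_rel_range S'.subspace_rel_range sub] by fastforce
      then show ?thesis
        using dims True assms(3) k by (simp add: critical_def)
    next
      case False
      then have "vec.dim (rel_eigenspace f S \<nu>) < vec.dim S + k"
        using dim_rel_eigenspace_le[of \<nu>] by (simp add: critical_def)
      moreover have "vec.dim (rel_range f S \<nu>) \<le> vec.dim (rel_range f S' \<nu>)"
        by (rule vec.dim_subset[OF sub])
      ultimately show ?thesis
        using dims assms(3) by linarith
    qed
  qed
  then show ?thesis
    using codim assms(3) k
    by (intro small_eigenspaces.intro[OF S'(1)] small_eigenspaces_axioms.intro) auto
qed

end

locale complex_small_eigenspaces = small_eigenspaces f S k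
  for f :: "complex^'n \<Rightarrow> complex^'n" and S k
begin

lemma exists_plane_generator:
  assumes "1 \<le> k"
  shows "\<exists>w. plane_generator f S w"
proof -
  obtain x0 where "x0 \<notin> S"
    using rel_eigenspace_neq_UNIV[OF assms] subset_rel_eigenspace by blast
  then obtain x1 \<mu> where x1: "x1 \<notin> S" "x1 \<in> rel_eigenspace f S \<mu>"
    using exists_rel_eigenvector[OF linear_f subspace_S] by blast
  obtain x0' where "x0' \<notin> rel_eigenspace f S \<mu>"
    using rel_eigenspace_neq_UNIV[OF assms] by blast
  then obtain x2 \<nu> where x2: "x2 \<notin> rel_eigenspace f S \<mu>"
      "x2 \<in> rel_eigenspace f (rel_eigenspace f S \<mu>) \<nu>"
    using exists_rel_eigenvector[OF linear_f subspace_rel_eigenspace] by blast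
  show ?thesis
  proof (cases "\<nu> = \<mu>")
    case True
    then show ?thesis
      using x2 unfolding plane_generator_def by blast
  next
    case False
    then obtain x3 where "x3 \<in> rel_eigenspace f S \<nu>" "x3 \<notin> rel_eigenspace f S \<mu>"
      using exists_rel_eigenvector_not_in[OF x2(2,1)] by blast
    then show ?thesis
      using plane_generator_add[OF x1(2,1)] False by blast
  qed
qed

lemma exists_plane_generator_one_critical:
  assumes "critical \<alpha>" and unique: "\<And>\<nu>. critical \<nu> \<Longrightarrow> \<nu> = \<alpha>" and "1 \<le> k"
  shows "\<exists>w. plane_generator f S w \<and> (\<forall>\<nu>. critical \<nu> \<longrightarrow> w \<notin> rel_range f S \<nu>)"
proof -
  let ?E = "rel_eigenspace f S \<alpha>" and ?R = "rel_range f S \<alpha>"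
  obtain x0 where "x0 \<notin> ?E"
    using rel_eigenspace_neq_UNIV[OF assms(3)] by blast
  then obtain x2 \<nu> where x2: "x2 \<notin> ?E" "x2 \<in> rel_eigenspace f ?E \<nu>"
    using exists_rel_eigenvector[OF linear_f subspace_rel_eigenspace] by blast
  have "\<exists>w. plane_generator f S w \<and> w \<notin> ?R"
  proof (cases "\<nu> = \<alpha> \<and> x2 \<notin> ?R")
    case True
    then show ?thesis
      using x2 unfolding plane_generator_def by blast
  next
    case False
    obtain z where z: "z \<in> ?R" "z \<notin> ?E"
      and gen: "\<And>x. x \<in> ?E \<Longrightarrow> x \<notin> S \<Longrightarrow> plane_generator f S (x + z)"
    proof (cases "\<nu> = \<alpha>")
      case True
      have "plane_generator f S (x + x2)" if "x \<in> ?E" for x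
      proof -
        have "x + x2 \<in> rel_eigenspace f ?E \<alpha>"
          using that x2(2) True rel_eigenspace_subset_rel_eigenspace2
            invariant_subspace.subspace_rel_eigenspace[OF invariant_subspace_rel_eigenspace]
          by (blast intro: vec.subspace_add)
        moreover have "x + x2 \<notin> ?E"
          using that x2(1) vec.subspace_diff[OF subspace_rel_eigenspace, of "x + x2" \<alpha> x] by auto
        ultimately show ?thesis
          unfolding plane_generator_def by blast
      qed
      moreover have "x2 \<in> ?R"
        using False True by blast
      ultimately show thesis
        using that x2(1) by blast
    next
      case False
      then obtain x3 where "x3 \<in> rel_eigenspace f S \<nu>" "x3 \<notin> ?E"
        using exists_rel_eigenvector_not_in[OF x2(2,1)] by blast
      then show thesis
        using that plane_generator_add False rel_eigenspace_subset_rel_range[OF False] by blast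
    qed
    obtain x1 where x1: "x1 \<in> ?E" "x1 \<notin> ?R"
      using critical_rel_eigenspace_not_subset_rel_range[OF assms(1) z] by blast
    then have "x1 \<notin> S"
      using subset_rel_range by blast
    moreover have "x1 + z \<notin> ?R"
      using x1(2) z(1) vec.subspace_diff[OF subspace_rel_range, of "x1 + z" \<alpha> z] by auto
    ultimately show ?thesis
      using gen[OF x1(1)] by blast
  qed
  then show ?thesis
    using unique by blast
qed

lemma exists_plane_generator_avoiding_critical:
  assumes "1 \<le> k"
  shows "\<exists>w. plane_generator f S w \<and> (\<forall>\<nu>. critical \<nu> \<longrightarrow> w \<notin> rel_range f S \<nu>)"
proof -
  consider (two) \<alpha> \<mu> where "critical \<alpha>" "critical \<mu>" "\<alpha> \<noteq> \<mu>"
    | (one) \<alpha> where "critical \<alpha>" "\<And>\<nu>. critical \<nu> \<Longrightarrow> \<nu> = \<alpha>"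
    | (none) "\<And>\<nu>. \<not> critical \<nu>"
    by blast
  then show ?thesis
  proof cases
    case two
    then show ?thesis
      using exists_plane_generator_two_critical assms by blast
  next
    case one
    then show ?thesis
      using exists_plane_generator_one_critical assms by blast
  next
    case none
    then show ?thesis
      using exists_plane_generator[OF assms] by blast
  qed
qed

end

lemma exists_spanning_pairs:
  fixes f :: "complex^'n \<Rightarrow> complex^'n"
  assumes "small_eigenspaces f S k"
  shows "\<exists>W. finite W \<and> card W \<le> k \<and> vec.span (S \<union> W \<union> f ` W) = UNIV"
  using assms
proof (induction k arbitrary: S)
  case 0
  then interpret small_eigenspaces f S 0 .
  have "vec.dim (UNIV :: (complex^'n) set) \<le> vec.dim S"
    using codim by (simp only: vec_dim_card)
  then have "S = UNIV"
    by (intro vec.subspace_dim_equal[OF subspace_S vec.subspace_UNIV]) auto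
  then show ?case
    by (intro exI[of _ "{}"]) simp
next
  case (Suc k)
  then interpret complex_small_eigenspaces f S "Suc k"
    by (simp add: complex_small_eigenspaces_def)
  have "1 \<le> Suc k"
    by simp
  then obtain w where w: "plane_generator f S w"
    and avoid: "\<And>\<alpha>. critical \<alpha> \<Longrightarrow> w \<notin> rel_range f S \<alpha>"
    using exists_plane_generator_avoiding_critical by blast
  define S' where "S' = plane_extension f S w"
  have span_S': "insert w (insert (f w) S) \<subseteq> S'"
    unfolding S'_def plane_extension_def by (rule vec.span_superset)
  have "small_eigenspaces f S' (Suc k - 1)"
  proof (rule small_eigenspaces_extension)
    show "invariant_subspace f S'"
      unfolding S'_def by (rule invariant_subspace_plane_extension[OF w])
    show "vec.dim S' = vec.dim S + 2"
      unfolding S'_def by (rule dim_plane_extension[OF w])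
    show "\<not> S' \<subseteq> rel_range f S \<alpha>" if "critical \<alpha>" for \<alpha>
      using avoid[OF that] span_S' by blast
  qed (use span_S' in auto)
  then have "small_eigenspaces f S' k"
    by simp
  then obtain W' where W': "finite W'" "card W' \<le> k" "vec.span (S' \<union> W' \<union> f ` W') = UNIV"
    using Suc.IH by blast
  let ?W = "insert w W'"
  have "S' \<subseteq> vec.span (S \<union> ?W \<union> f ` ?W)"
    unfolding S'_def plane_extension_def by (rule vec.span_mono) auto
  moreover have "W' \<union> f ` W' \<subseteq> vec.span (S \<union> ?W \<union> f ` ?W)"
    by (rule order.trans[OF _ vec.span_superset]) auto
  ultimately have "vec.span (S' \<union> W' \<union> f ` W') \<subseteq> vec.span (S \<union> ?W \<union> f ` ?W)"
    by (intro vec.span_minimal[OF _ vec.subspace_span]) auto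
  then have "vec.span (S \<union> ?W \<union> f ` ?W) = UNIV"
    using W'(3) by auto
  then show ?case
    using W' by (intro exI[of _ ?W]) (simp add: card_insert_if)
qed

lemma span_Int_image_span_eq_0:
  fixes f :: "'a::field^'n \<Rightarrow> 'a^'n"
  assumes lin: "Vector_Spaces.linear (*s) (*s) f" and W: "finite W" "card W \<le> n"
    and card: "CARD('n) = 2 * n" and spanning: "vec.span (W \<union> f ` W) = UNIV"
  shows "vec.dim (vec.span W) = n \<and> f ` vec.span W \<inter> vec.span W = {0}"
proof -
  let ?V = "vec.span W"
  have image: "f ` ?V = vec.span (f ` W)"
    by (rule vec.linear_span_image[OF lin, symmetric])
  have sums: "{x + y |x y. x \<in> ?V \<and> y \<in> f ` ?V} = UNIV"
    using spanning vec.span_Un[of W "f ` W"] image by simp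
  have "vec.dim {x + y |x y. x \<in> ?V \<and> y \<in> f ` ?V} + vec.dim (?V \<inter> f ` ?V)
      = vec.dim ?V + vec.dim (f ` ?V)"
    by (rule vec.dim_sums_Int) (simp_all add: image)
  then have "CARD('n) + vec.dim (?V \<inter> f ` ?V) = vec.dim ?V + vec.dim (f ` ?V)"
    unfolding sums vec_dim_card .
  moreover have "vec.dim ?V \<le> n"
    using vec.dim_le_card[OF vec.span_superset W(1)] W(2) by simp
  moreover have "vec.dim (f ` ?V) \<le> vec.dim ?V"
    by (rule vec.dim_image_le[OF lin])
  ultimately have "vec.dim (?V \<inter> f ` ?V) = 0" "vec.dim ?V = n"
    using card by linarith+
  moreover have "0 \<in> f ` ?V"
    unfolding image by (rule vec.span_zero)
  ultimately show ?thesis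
    using vec.span_zero[of W] by auto
qed

lemma matrix_vector_mult_mat: "mat c *v x = c *s (x :: 'a::semiring_1^'n)"
proof (rule vec_eq_iff[THEN iffD2], rule allI)
  fix i
  have "(mat c *v x) $ i = (\<Sum>j\<in>UNIV. if i = j then c * x $ j else 0)"
    unfolding matrix_vector_mult_def vec_lambda_beta by (rule sum.cong) (auto simp: mat_def)
  then show "(mat c *v x) $ i = (c *s x) $ i"
    by simp
qed

theorem lemma5p4:
  fixes n :: nat and A :: "complex ^ 'm ^ 'm"
  assumes "n \<ge> 1"
    and "CARD('m) = 2 * n + 2"
    and "invertible A"
    and "\<forall>\<alpha>::complex. rank (A - mat \<alpha>) \<ge> n + 1"
  shows "\<exists>W :: (complex ^ 'm) set. vec.subspace W \<and> vec.dim W = n + 1 \<and>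
           ((\<lambda>x. A *v x) ` W) \<inter> W = {0}"
proof -
  let ?f = "\<lambda>x. A *v x"
  have lin: "Vector_Spaces.linear (*s) (*s) ?f"
    by (rule matrix_vector_mul_linear_gen)
  have "rel_eigenspace ?f {0} \<nu> = {x. (A - mat \<nu>) *v x = 0}" for \<nu>
    by (auto simp: rel_eigenspace_def matrix_vector_mult_diff_rdistrib matrix_vector_mult_mat)
  then have "vec.dim (rel_eigenspace ?f {0} \<nu>) \<le> n + 1" for \<nu>
    using dim_null_space_add_rank_le[of "A - mat \<nu>"] assms(2) assms(4)[rule_format, of \<nu>]
    by simp
  then have "small_eigenspaces ?f {0} (n + 1)"
    using lin assms(2) by unfold_locales (auto simp: matrix_vector_mult_0_right)
  then obtain W where W: "finite W" "card W \<le> n + 1" "vec.span ({0} \<union> W \<union> ?f ` W) = UNIV"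
    using exists_spanning_pairs by blast
  then have "vec.dim (vec.span W) = n + 1 \<and> ?f ` vec.span W \<inter> vec.span W = {0}"
    using span_Int_image_span_eq_0[OF lin W(1,2)] assms(2) by simp
  then show ?thesis
    by (intro exI[of _ "vec.span W"]) simp
qed

end
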